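(* Fix a positive integer $l$. Let $\sigma$ be a random permutation uniformly distributed on the symmetric group $S_N$, and let $\tau$ be a random permutation uniformly distributed on the alternating group $A_N$. Then, as $N\to\infty$, $$\mathrm{Ex}\big[C_\tau^{\underline{l}}\big] = \mathrm{Ex}\big[C_\sigma^{\underline{l}}\big] + O\left(\frac{(\log N)^{l-1}}{N}\right).$$
   Context: For a permutation $\pi$ of $\{1,\ldots,N\}$, $C_\pi$ denotes the number of cycles of $\pi$; $\mathrm{Ex}$ denotes expectation. For a real number $x$, $x^{\underline{l}}=x(x-1)\cdots(x-l+1)$ denotes the $l$-th falling power. *)

theory Defs
  imports "HOL-Analysis.Analysis" "HOL-Combinatorics.Combinatorics" "HOL-Library.Landau_Symbols"
begin

definition falling_pow :: "real \<Rightarrow> nat \<Rightarrow> real" where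
  "falling_pow x l = (\<Prod>i<l. x - real i)"

definition num_cycles :: "nat \<Rightarrow> (nat \<Rightarrow> nat) \<Rightarrow> nat" where
  "num_cycles N p = card ((\<lambda>x. orbit p x) ` {1..N})"

definition sym_group :: "nat \<Rightarrow> (nat \<Rightarrow> nat) set" where
  "sym_group N = {p. p permutes {1..N}}"

definition alt_group :: "nat \<Rightarrow> (nat \<Rightarrow> nat) set" where
  "alt_group N = {p. p permutes {1..N} \<and> evenperm p}"

definition uniform_ex :: "'a set \<Rightarrow> ('a \<Rightarrow> real) \<Rightarrow> real" where
  "uniform_ex S f = (\<Sum>x\<in>S. f x) / real (card S)"

end

(* Write a permutation of {1..N+1} as (N+1 b) \<circ> q with q a permutation of {1..N}: for
   b = N+1 this adds a fixed point, otherwise it splices N+1 into a cycle of q and flips the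
   sign.  Hence the signed sums D(N,g) = \<Sum>\<^sub>\<sigma> sgn \<sigma> g(C\<^sub>\<sigma>) satisfy
   D(N+1,g) = D(N, c \<mapsto> g(c+1) - N g(c)), and Pascal's rule for falling powers turns this into
   D(N+1,l+1) = (1-N) D(N,l+1) + (l+1) D(N,l) for g = c\<^sup>l (falling).  As D(N,0) = 0 for N \<ge> 2,
   induction on l gives D(N,l) = O((N-1)!).  The difference of the two expectations is
   D(N,l)/N! = O(1/N), which is stronger than claimed. *)

theory Submission
  imports Defs
begin

lemma card_image_eq_if_same_kernel:
  assumes "\<And>x y. x \<in> A \<Longrightarrow> y \<in> A \<Longrightarrow> f x = f y \<longleftrightarrow> g x = g y"
  shows "card (f ` A) = card (g ` A)"
proof -
  let ?P = "(\<lambda>x. (f x, g x)) ` A"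
  have "inj_on fst ?P" "inj_on snd ?P"
    using assms by (auto simp: inj_on_def)
  then have "card (fst ` ?P) = card (snd ` ?P)"
    by (simp add: card_image)
  then show ?thesis
    by (simp add: image_image)
qed

lemma orbit_eq_iff:
  assumes "permutation f"
  shows "orbit f x = orbit f y \<longleftrightarrow> y \<in> orbit f x"
  using assms cyclic_on_orbit' orbit_cyclic_eq3 permutation_self_in_orbit by metis

lemma card_orbits_insert_fixpoint:
  assumes "finite S" "p permutes S" "a \<notin> S"
  shows "card (orbit p ` insert a S) = Suc (card (orbit p ` S))"
proof -
  have "orbit p a = {a}"
    using assms by (simp add: orbit_eq_singleton_iff permutes_not_in)
  moreover have "{a} \<notin> orbit p ` S"
    using assms permutes_orbit_subset by fastforce
  ultimately show ?thesis
    using assms by simp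
qed

lemma transpose_comp_apply:
  assumes "p permutes S" "a \<notin> S" "b \<in> S"
  shows "Transposition.transpose a b (p z) = (if p z = b then a else if z = a then b else p z)"
  using assms by (auto simp: Transposition.transpose_def permutes_not_in permutes_in_image
      dest: permutes_inj[THEN injD])

text \<open>Composing with the transposition of a new point \<open>a\<close> and \<open>b\<close> splices \<open>a\<close> into the
  cycle of \<open>b\<close>, just before \<open>b\<close>; all other cycles are unchanged.\<close>

lemma orbit_transpose_comp:
  assumes p: "p permutes S" and a: "a \<notin> S" and b: "b \<in> S" and x: "x \<in> S"
  shows "orbit (Transposition.transpose a b \<circ> p) x - {a} = orbit p x"
proof -
  let ?q = "Transposition.transpose a b \<circ> p"
  note q = transpose_comp_apply[OF p a b]
  have p_orbit_in_S: "orbit p x \<subseteq> S"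
    using permutes_orbit_subset[OF p x] .
  have p_a: "p a = a"
    using p a by (rule permutes_not_in)
  have q_orbit: "z \<in> orbit p x \<or> (z = a \<and> b \<in> orbit p x)" if "z \<in> orbit ?q x" for z
    using that
  proof induction
    case base
    then show ?case using a x by (auto simp: q intro: orbit.base)
  next
    case (step z)
    then show ?case using a p_orbit_in_S by (auto simp: q intro: orbit.step)
  qed
  have p_step: "p y \<in> orbit ?q x" if "y = x \<or> y \<in> orbit ?q x" "y \<noteq> a" for y
  proof -
    have "?q y \<in> orbit ?q x"
      using that(1) by (metis orbit.base orbit.step)
    show ?thesis
    proof (cases "p y = b")
      case True
      with \<open>?q y \<in> orbit ?q x\<close> have "a \<in> orbit ?q x"
        by (simp add: q)
      then have "?q a \<in> orbit ?q x"
        by (rule orbit.step)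
      then show ?thesis
        using True a b by (auto simp: q p_a)
    next
      case False
      then show ?thesis
        using \<open>?q y \<in> orbit ?q x\<close> that(2) by (simp add: q)
    qed
  qed
  have "z \<in> orbit ?q x" if "z \<in> orbit p x" for z
    using that
  proof induction
    case base
    show ?case using p_step a x by blast
  next
    case (step z)
    then show ?case using p_step a p_orbit_in_S by blast
  qed
  then show ?thesis
    using q_orbit a p_orbit_in_S by blast
qed

lemma card_orbits_transpose_comp:
  assumes S: "finite S" and p: "p permutes S" and a: "a \<notin> S" and b: "b \<in> S"
  shows "card (orbit (Transposition.transpose a b \<circ> p) ` insert a S) = card (orbit p ` S)"
proof -
  let ?q = "Transposition.transpose a b \<circ> p"
  have "?q permutes insert a S"
    using p b by (intro permutes_compose permutes_swap_id) (auto intro: permutes_subset)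
  then have perm_q: "permutation ?q"
    using S by (metis finite_insert permutation_permutes)
  have perm_p: "permutation p"
    using S p by (auto simp: permutation_permutes)
  define c where "c = inv p b"
  have "c \<in> S" "?q c = a"
    using p b by (auto simp: c_def transpose_comp_apply[OF p a b] permutes_inverses
        permutes_in_image[OF permutes_inv])
  then have "orbit ?q a = orbit ?q c"
    using orbit_eq_iff[OF perm_q, of c a] by (metis orbit.base)
  then have "orbit ?q ` insert a S = orbit ?q ` S"
    using \<open>c \<in> S\<close> by auto
  also have "card \<dots> = card (orbit p ` S)"
  proof (rule card_image_eq_if_same_kernel)
    fix x y assume "x \<in> S" "y \<in> S"
    then have "y \<in> orbit ?q x \<longleftrightarrow> y \<in> orbit p x"
      using orbit_transpose_comp[OF p a b, of x] a by blast
    then show "orbit ?q x = orbit ?q y \<longleftrightarrow> orbit p x = orbit p y"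
      using orbit_eq_iff[OF perm_q] orbit_eq_iff[OF perm_p] by simp
  qed
  finally show ?thesis .
qed

lemma num_cycles_Suc_fixpoint:
  assumes "p permutes {1..N}"
  shows "num_cycles (Suc N) p = Suc (num_cycles N p)"
  using card_orbits_insert_fixpoint[OF _ assms, of "Suc N"]
  by (simp add: num_cycles_def atLeastAtMostSuc_conv)

lemma num_cycles_Suc_transpose_comp:
  assumes "p permutes {1..N}" "b \<in> {1..N}"
  shows "num_cycles (Suc N) (Transposition.transpose (Suc N) b \<circ> p) = num_cycles N p"
  using card_orbits_transpose_comp[OF _ assms(1) _ assms(2), of "Suc N"]
  by (simp add: num_cycles_def atLeastAtMostSuc_conv)

definition signed_cycle_sum :: "nat \<Rightarrow> (nat \<Rightarrow> real) \<Rightarrow> real" where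
  "signed_cycle_sum N g = (\<Sum>p\<in>sym_group N. of_int (sign p) * g (num_cycles N p))"

lemma signed_cycle_sum_linear:
  "signed_cycle_sum N (\<lambda>c. u * f c + v * g c) = u * signed_cycle_sum N f + v * signed_cycle_sum N g"
  unfolding signed_cycle_sum_def by (simp add: sum.distrib sum_distrib_left algebra_simps)

lemma signed_cycle_sum_Suc:
  "signed_cycle_sum (Suc N) g = signed_cycle_sum N (\<lambda>c. g (Suc c) - real N * g c)"
proof -
  let ?F = "\<lambda>p. of_int (sign p) * g (num_cycles (Suc N) p)"
  let ?\<tau> = "\<lambda>b. Transposition.transpose (Suc N) b"
  have "signed_cycle_sum (Suc N) g =
      (\<Sum>b\<in>insert (Suc N) {1..N}. \<Sum>q\<in>sym_group N. ?F (?\<tau> b \<circ> q))"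
    using sum_over_permutations_insert[of "{1..N}" "Suc N" ?F]
    by (simp add: signed_cycle_sum_def sym_group_def atLeastAtMostSuc_conv)
  also have "\<dots> = (\<Sum>q\<in>sym_group N. ?F q) + (\<Sum>b\<in>{1..N}. \<Sum>q\<in>sym_group N. ?F (?\<tau> b \<circ> q))"
    by simp
  also have "(\<Sum>q\<in>sym_group N. ?F q) =
      (\<Sum>q\<in>sym_group N. of_int (sign q) * g (Suc (num_cycles N q)))"
    by (rule sum.cong) (auto simp: sym_group_def num_cycles_Suc_fixpoint)
  also have "(\<Sum>b\<in>{1..N}. \<Sum>q\<in>sym_group N. ?F (?\<tau> b \<circ> q)) =
      (\<Sum>b\<in>{1..N}. \<Sum>q\<in>sym_group N. - (of_int (sign q) * g (num_cycles N q)))"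
  proof (intro sum.cong refl)
    fix b q assume "b \<in> {1..N}" "q \<in> sym_group N"
    moreover from this have "permutation q"
      by (auto simp: sym_group_def permutation_permutes)
    ultimately show "?F (?\<tau> b \<circ> q) = - (of_int (sign q) * g (num_cycles N q))"
      by (simp add: sym_group_def num_cycles_Suc_transpose_comp sign_compose sign_swap_id
          permutation_swap_id)
  qed
  finally show ?thesis
    by (simp add: signed_cycle_sum_def sum_negf sum_subtractf sum_distrib_left algebra_simps)
qed

lemma falling_pow_0 [simp]: "falling_pow x 0 = 1"
  by (simp add: falling_pow_def)

lemma falling_pow_Suc: "falling_pow x (Suc l) = falling_pow x l * (x - real l)"
  by (simp add: falling_pow_def)

lemma falling_pow_Suc_shift: "falling_pow (x + 1) (Suc l) = (x + 1) * falling_pow x l"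
  unfolding falling_pow_def by (subst prod.lessThan_Suc_shift) (simp add: algebra_simps)

lemma falling_pow_add_1:
  "falling_pow (x + 1) (Suc l) = falling_pow x (Suc l) + real (Suc l) * falling_pow x l"
  by (subst falling_pow_Suc_shift, subst falling_pow_Suc) (simp add: algebra_simps)

definition signed_falling_moment :: "nat \<Rightarrow> nat \<Rightarrow> real" where
  "signed_falling_moment N l = signed_cycle_sum N (\<lambda>c. falling_pow (real c) l)"

lemma signed_falling_moment_Suc_0:
  "signed_falling_moment (Suc N) 0 = (1 - real N) * signed_falling_moment N 0"
  using signed_cycle_sum_linear[of N "1 - real N" "\<lambda>_. 1" 0 "\<lambda>_. 0"]
  by (simp add: signed_falling_moment_def signed_cycle_sum_Suc algebra_simps)

lemma signed_falling_moment_Suc_Suc: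
  "signed_falling_moment (Suc N) (Suc l) =
    (1 - real N) * signed_falling_moment N (Suc l) + real (Suc l) * signed_falling_moment N l"
  unfolding signed_falling_moment_def signed_cycle_sum_Suc signed_cycle_sum_linear[symmetric]
  by (simp add: falling_pow_add_1[unfolded add.commute[of _ 1]] algebra_simps)

lemma signed_falling_moment_0_eq_0:
  assumes "N \<ge> 2"
  shows "signed_falling_moment N 0 = 0"
  using assms
proof (induction N rule: nat_induct_at_least)
  case base
  show ?case
    using signed_falling_moment_Suc_0[of 1] by (simp add: numeral_2_eq_2)
next
  case (Suc n)
  then show ?case
    by (simp add: signed_falling_moment_Suc_0)
qed

lemma factorial_bound_of_recurrence:
  fixes f g :: "nat \<Rightarrow> real"
  assumes rec: "\<And>n. n \<ge> 2 \<Longrightarrow> f (Suc n) = (1 - real n) * f n + c * g n"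
    and g: "\<And>n. n \<ge> 2 \<Longrightarrow> \<bar>g n\<bar> \<le> K * fact (n - 1)"
  shows "\<exists>K'. \<forall>n\<ge>2. \<bar>f n\<bar> \<le> K' * fact (n - 1)"
proof -
  define K' where "K' = max \<bar>f 2\<bar> (\<bar>c\<bar> * K)"
  have "\<bar>f n\<bar> \<le> K' * fact (n - 1)" if "n \<ge> 2" for n
    using that
  proof (induction n rule: nat_induct_at_least)
    case base
    show ?case by (simp add: K'_def)
  next
    case (Suc n)
    have "\<bar>f (Suc n)\<bar> \<le> (real n - 1) * \<bar>f n\<bar> + \<bar>c\<bar> * \<bar>g n\<bar>"
      using rec[OF Suc.hyps] Suc.hyps abs_triangle_ineq[of "(1 - real n) * f n" "c * g n"]
      by (simp add: abs_mult)
    also have "\<dots> \<le> (real n - 1) * (K' * fact (n - 1)) + \<bar>c\<bar> * (K * fact (n - 1))"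
      using Suc.IH Suc.hyps g[OF Suc.hyps]
      by (intro add_mono mult_left_mono) auto
    also have "\<dots> \<le> (real n - 1) * (K' * fact (n - 1)) + K' * fact (n - 1)"
      by (intro add_left_mono) (simp add: K'_def mult.assoc[symmetric] mult_right_mono)
    also have "\<dots> = K' * fact (Suc n - 1)"
      using Suc.hyps by (simp add: fact_reduce[of n] algebra_simps)
    finally show ?case .
  qed
  then show ?thesis by blast
qed

lemma signed_falling_moment_bound:
  "\<exists>K. \<forall>N\<ge>2. \<bar>signed_falling_moment N l\<bar> \<le> K * fact (N - 1)"
proof (induction l)
  case 0
  show ?case
    by (rule exI[of _ 0]) (simp add: signed_falling_moment_0_eq_0)
next
  case (Suc l)
  then obtain K where "\<forall>N\<ge>2. \<bar>signed_falling_moment N l\<bar> \<le> K * fact (N - 1)"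
    by blast
  then show ?case
    by (intro factorial_bound_of_recurrence[where c = "real (Suc l)" and K = K and g = "\<lambda>N. signed_falling_moment N l"])
      (simp_all add: signed_falling_moment_Suc_Suc)
qed

lemma finite_sym_group: "finite (sym_group N)"
  by (simp add: sym_group_def finite_permutations)

lemma card_sym_group: "card (sym_group N) = fact N"
  unfolding sym_group_def by (rule card_permutations) auto

lemma alt_group_subset_sym_group: "alt_group N \<subseteq> sym_group N"
  by (auto simp: alt_group_def sym_group_def)

lemma sum_sign_mult_eq:
  "(\<Sum>p\<in>sym_group N. of_int (sign p) * h p) =
    (\<Sum>p\<in>alt_group N. h p) - (\<Sum>p\<in>sym_group N - alt_group N. h p :: real)"
proof -
  have "(\<Sum>p\<in>sym_group N. of_int (sign p) * h p) =
      (\<Sum>p\<in>sym_group N - alt_group N. of_int (sign p) * h p) + (\<Sum>p\<in>alt_group N. of_int (sign p) * h p)"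
    by (rule sum.subset_diff[OF alt_group_subset_sym_group finite_sym_group])
  also have "\<dots> = (\<Sum>p\<in>sym_group N - alt_group N. - h p) + (\<Sum>p\<in>alt_group N. h p)"
    by (intro arg_cong2[where f = "(+)"] sum.cong) (auto simp: sign_def alt_group_def sym_group_def)
  finally show ?thesis
    by (simp add: sum_negf)
qed

text \<open>Even and odd permutations are equinumerous because the signed moment of order \<open>0\<close> vanishes.\<close>

lemma card_alt_group:
  assumes "N \<ge> 2"
  shows "2 * real (card (alt_group N)) = fact N"
proof -
  have "(\<Sum>p\<in>sym_group N. of_int (sign p) * 1 :: real) = 0"
    using signed_falling_moment_0_eq_0[OF assms]
    by (simp add: signed_falling_moment_def signed_cycle_sum_def)
  then have "card (alt_group N) = card (sym_group N - alt_group N)"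
    using sum_sign_mult_eq[where h = "\<lambda>_. 1"] by simp
  moreover have "card (sym_group N - alt_group N) = card (sym_group N) - card (alt_group N)"
    by (rule card_Diff_subset[OF finite_subset[OF alt_group_subset_sym_group finite_sym_group]
          alt_group_subset_sym_group])
  moreover have "card (alt_group N) \<le> card (sym_group N)"
    by (rule card_mono[OF finite_sym_group alt_group_subset_sym_group])
  ultimately have "2 * card (alt_group N) = fact N"
    by (simp add: card_sym_group)
  then show ?thesis
    by (metis of_nat_fact of_nat_mult of_nat_numeral)
qed

lemma uniform_ex_alt_group_minus_sym_group:
  assumes "N \<ge> 2"
  shows "uniform_ex (alt_group N) h - uniform_ex (sym_group N) h =
    (\<Sum>p\<in>sym_group N. of_int (sign p) * h p) / fact N"
proof -
  define A where "A = (\<Sum>p\<in>alt_group N. h p)"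
  define B where "B = (\<Sum>p\<in>sym_group N - alt_group N. h p)"
  have "uniform_ex (sym_group N) h = (B + A) / fact N"
    unfolding uniform_ex_def card_sym_group A_def B_def
    using sum.subset_diff[OF alt_group_subset_sym_group finite_sym_group, of h] by simp
  moreover have "uniform_ex (alt_group N) h = 2 * A / fact N"
  proof -
    have card_alt: "real (card (alt_group N)) = fact N / 2"
      using card_alt_group[OF assms] by simp
    show ?thesis
      unfolding uniform_ex_def A_def card_alt by simp
  qed
  ultimately show ?thesis
    unfolding sum_sign_mult_eq A_def B_def by (simp add: diff_divide_distrib[symmetric])
qed

lemma falling_moment_difference_bigo:
  "(\<lambda>N. uniform_ex (alt_group N) (\<lambda>p. falling_pow (real (num_cycles N p)) l)
      - uniform_ex (sym_group N) (\<lambda>p. falling_pow (real (num_cycles N p)) l))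
    \<in> O(\<lambda>N. 1 / real N)"
proof -
  obtain K where K: "\<And>N. N \<ge> 2 \<Longrightarrow> \<bar>signed_falling_moment N l\<bar> \<le> K * fact (N - 1)"
    using signed_falling_moment_bound[of l] by blast
  have "\<bar>uniform_ex (alt_group N) (\<lambda>p. falling_pow (real (num_cycles N p)) l)
      - uniform_ex (sym_group N) (\<lambda>p. falling_pow (real (num_cycles N p)) l)\<bar> \<le> K * (1 / real N)"
    if N: "N \<ge> 2" for N
  proof -
    have fact_N: "fact N = real N * fact (N - 1)"
      using N by (simp add: fact_reduce[of N])
    have "\<bar>signed_falling_moment N l / fact N\<bar> \<le> K * fact (N - 1) / fact N"
      using K[OF N] by (simp add: divide_right_mono)
    also have "\<dots> = K * (1 / real N)"
      using N by (simp add: fact_N)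
    finally show ?thesis
      using uniform_ex_alt_group_minus_sym_group[OF N]
      by (simp add: signed_falling_moment_def signed_cycle_sum_def)
  qed
  then show ?thesis
    by (intro bigoI[where c = K]) (auto simp: eventually_at_top_linorder intro!: exI[of _ 2])
qed

lemma inverse_bigo_ln_power_over:
  "(\<lambda>N::nat. 1 / real N) \<in> O(\<lambda>N. ln (real N) ^ k / real N)"
proof (intro bigoI[where c = 1] eventually_mono[OF eventually_ge_at_top[of 3]])
  fix N :: nat assume "N \<ge> 3"
  then have "exp 1 \<le> real N"
    using exp_le by linarith
  then have "1 \<le> ln (real N)"
    using \<open>N \<ge> 3\<close> by (simp add: ln_ge_iff)
  then show "norm (1 / real N) \<le> 1 * norm (ln (real N) ^ k / real N)"
    by (simp add: divide_right_mono one_le_power)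
qed

theorem theorem3p2:
  fixes l :: nat
  assumes "l > 0"
  shows "(\<lambda>N. uniform_ex (alt_group N) (\<lambda>p. falling_pow (real (num_cycles N p)) l)
              - uniform_ex (sym_group N) (\<lambda>p. falling_pow (real (num_cycles N p)) l))
         \<in> O(\<lambda>N. ln (real N) ^ (l - 1) / real N)"
  using falling_moment_difference_bigo inverse_bigo_ln_power_over by (rule landau_o.big_trans)

end
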